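(* Let $n\ge1$ and let $\boldsymbol{\xi}=(\xi_1,\dots,\xi_n)\in\mathbb{R}^n$ be an exchangeable random vector with $\mathbb{E}[\|\boldsymbol{\xi}\|_2^2]<\infty$, where $\|\boldsymbol{\xi}\|_2^2=\sum_i\xi_i^2$. Let $S_k=\xi_1+\dots+\xi_k$. Then for all $1\le k\le n$, $$\mathrm{Var}(S_k)\le\frac{k}{n}\,\mathbb{E}\big[\|\boldsymbol{\xi}\|_2^2\big]+\frac{k^2}{n^2}\,\mathrm{Var}(S_n).$$
   Context: Exchangeable means the law of $(\xi_{\sigma(1)},\dots,\xi_{\sigma(n)})$ equals that of $(\xi_1,\dots,\xi_n)$ for every permutation $\sigma$. *)

theory Defs
  imports "HOL-Probability.Probability" "HOL-Combinatorics.Permutations"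
begin

definition random_vec :: "nat \<Rightarrow> (nat \<Rightarrow> 'a \<Rightarrow> real) \<Rightarrow> 'a \<Rightarrow> (nat \<Rightarrow> real)" where
  "random_vec n \<xi> = (\<lambda>\<omega>. \<lambda>i\<in>{1..n}. \<xi> i \<omega>)"

definition exchangeable :: "'a measure \<Rightarrow> nat \<Rightarrow> (nat \<Rightarrow> 'a \<Rightarrow> real) \<Rightarrow> bool" where
  "exchangeable M n \<xi> \<longleftrightarrow>
     (\<forall>\<sigma>. \<sigma> permutes {1..n} \<longrightarrow>
        distr M (PiM {1..n} (\<lambda>_. borel)) (random_vec n (\<lambda>i. \<xi> (\<sigma> i)))
        = distr M (PiM {1..n} (\<lambda>_. borel)) (random_vec n \<xi>))"

end

theory Submission
  imports Defs
begin

text \<open>By exchangeability all \<open>\<xi>\<^sub>i\<close> share the mean \<open>m\<close> and second moment \<open>a\<close>, and all products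
  \<open>\<xi>\<^sub>i \<xi>\<^sub>j\<close> with \<open>i \<noteq> j\<close> share the mean \<open>b\<close>. Hence \<open>Var S\<^sub>p = p a + p (p - 1) b - p\<^sup>2 m\<^sup>2\<close>, and the
  difference of the two sides of the claim is \<open>(k / n) ((a + (n - 1) b) + (k - 1) (a - b))\<close>.
  Here \<open>a + (n - 1) b \<ge> 0\<close> because \<open>Var S\<^sub>n \<ge> 0\<close>, and \<open>a - b = E[(\<xi>\<^sub>1 - \<xi>\<^sub>2)\<^sup>2] / 2 \<ge> 0\<close>.\<close>

lemma random_vec_measurable:
  assumes "\<And>i. i \<in> {1..n} \<Longrightarrow> \<xi> i \<in> borel_measurable M"
  shows "random_vec n \<xi> \<in> M \<rightarrow>\<^sub>M PiM {1..n} (\<lambda>_. borel)"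
  unfolding random_vec_def using assms by (intro measurable_restrict) auto

lemma exchangeable_integral_permute:
  fixes f :: "(nat \<Rightarrow> real) \<Rightarrow> 'b::{banach, second_countable_topology}"
  assumes meas: "\<And>i. i \<in> {1..n} \<Longrightarrow> \<xi> i \<in> borel_measurable M"
    and "exchangeable M n \<xi>" and "\<sigma> permutes {1..n}"
    and f: "f \<in> borel_measurable (PiM {1..n} (\<lambda>_. borel))"
  shows "(\<integral>\<omega>. f (random_vec n (\<lambda>i. \<xi> (\<sigma> i)) \<omega>) \<partial>M) = (\<integral>\<omega>. f (random_vec n \<xi> \<omega>) \<partial>M)"
proof -
  have "\<xi> (\<sigma> i) \<in> borel_measurable M" if "i \<in> {1..n}" for i
    using meas permutes_in_image[OF \<open>\<sigma> permutes {1..n}\<close>] that by auto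
  then have "(\<integral>\<omega>. f (random_vec n (\<lambda>i. \<xi> (\<sigma> i)) \<omega>) \<partial>M)
      = integral\<^sup>L (distr M (PiM {1..n} (\<lambda>_. borel)) (random_vec n (\<lambda>i. \<xi> (\<sigma> i)))) f"
    by (intro integral_distr[symmetric] random_vec_measurable f)
  also have "\<dots> = integral\<^sup>L (distr M (PiM {1..n} (\<lambda>_. borel)) (random_vec n \<xi>)) f"
    using assms(2,3) unfolding exchangeable_def by simp
  also have "\<dots> = (\<integral>\<omega>. f (random_vec n \<xi> \<omega>) \<partial>M)"
    by (intro integral_distr random_vec_measurable meas f)
  finally show ?thesis .
qed

lemma exchangeable_integral_comp_eq:
  fixes g :: "real \<Rightarrow> 'b::{banach, second_countable_topology}"
  assumes "\<And>i. i \<in> {1..n} \<Longrightarrow> \<xi> i \<in> borel_measurable M" and "exchangeable M n \<xi>"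
    and "i \<in> {1..n}" "j \<in> {1..n}" and [measurable]: "g \<in> borel_measurable borel"
  shows "(\<integral>\<omega>. g (\<xi> i \<omega>) \<partial>M) = (\<integral>\<omega>. g (\<xi> j \<omega>) \<partial>M)"
proof -
  have "(\<lambda>x. g (x j)) \<in> borel_measurable (PiM {1..n} (\<lambda>_. borel))"
    using \<open>j \<in> {1..n}\<close> by measurable
  from exchangeable_integral_permute[OF assms(1,2) permutes_swap_id[of j _ i] this] assms(3,4)
  show ?thesis by (simp add: random_vec_def)
qed

lemma exchangeable_integral_pair_eq:
  fixes h :: "real \<Rightarrow> real \<Rightarrow> 'b::{banach, second_countable_topology}"
  assumes "\<And>i. i \<in> {1..n} \<Longrightarrow> \<xi> i \<in> borel_measurable M" and "exchangeable M n \<xi>"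
    and ij: "i \<in> {1..n}" "j \<in> {1..n}" "i \<noteq> j"
    and ij': "i' \<in> {1..n}" "j' \<in> {1..n}" "i' \<noteq> j'"
    and [measurable]: "case_prod h \<in> borel_measurable borel"
  shows "(\<integral>\<omega>. h (\<xi> i \<omega>) (\<xi> j \<omega>) \<partial>M) = (\<integral>\<omega>. h (\<xi> i' \<omega>) (\<xi> j' \<omega>) \<partial>M)"
proof -
  define \<sigma> where "\<sigma> = Transposition.transpose i i' \<circ> Transposition.transpose j' (Transposition.transpose i i' j)"
  have \<sigma>: "\<sigma> permutes {1..n}"
    unfolding \<sigma>_def using ij ij'
    by (intro permutes_compose permutes_swap_id) (auto simp: Transposition.transpose_def)
  have h_measurable: "(\<lambda>x. h (x i') (x j')) \<in> borel_measurable (PiM {1..n} (\<lambda>_. borel))"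
  proof -
    have "(\<lambda>x. case_prod h (x i', x j')) \<in> borel_measurable (PiM {1..n} (\<lambda>_. borel))"
      using ij' by measurable
    then show ?thesis
      by (simp only: case_prod_conv)
  qed
  have "\<sigma> i' = i" "\<sigma> j' = j"
    unfolding \<sigma>_def using ij ij' by (auto simp: Transposition.transpose_def)
  with exchangeable_integral_permute[OF assms(1,2) \<sigma> h_measurable] ij' show ?thesis
    by (simp add: random_vec_def)
qed

lemma integrable_summand_of_nonneg_sum:
  fixes f :: "'i \<Rightarrow> 'a \<Rightarrow> real"
  assumes "finite I" "i \<in> I" "f i \<in> borel_measurable M"
    and "\<And>j x. j \<in> I \<Longrightarrow> 0 \<le> f j x" and "integrable M (\<lambda>x. \<Sum>j\<in>I. f j x)"
  shows "integrable M (f i)"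
proof (rule Bochner_Integration.integrable_bound[OF assms(5) assms(3)])
  have "f i x \<le> (\<Sum>j\<in>I. f j x)" for x
    using assms by (intro member_le_sum) auto
  then show "AE x in M. norm (f i x) \<le> norm (\<Sum>j\<in>I. f j x)"
    using assms(2,4) by (simp add: sum_nonneg)
qed

lemma integrable_mult_of_square_integrable:
  fixes f g :: "'a \<Rightarrow> real"
  assumes "f \<in> borel_measurable M" "g \<in> borel_measurable M"
    and "integrable M (\<lambda>x. (f x)\<^sup>2)" "integrable M (\<lambda>x. (g x)\<^sup>2)"
  shows "integrable M (\<lambda>x. f x * g x)"
proof (rule Bochner_Integration.integrable_bound[OF Bochner_Integration.integrable_add[OF assms(3,4)]])
  show "(\<lambda>x. f x * g x) \<in> borel_measurable M"
    using assms(1,2) by measurable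
  have "\<bar>f x * g x\<bar> \<le> (f x)\<^sup>2 + (g x)\<^sup>2" for x
  proof -
    have "2 * \<bar>f x * g x\<bar> \<le> (f x)\<^sup>2 + (g x)\<^sup>2"
      using sum_squares_bound[of "\<bar>f x\<bar>" "\<bar>g x\<bar>"] by (simp add: abs_mult mult.assoc)
    then show ?thesis
      using abs_ge_zero[of "f x * g x"] by linarith
  qed
  then show "AE x in M. norm (f x * g x) \<le> norm ((f x)\<^sup>2 + (g x)\<^sup>2)"
    by simp
qed

lemma (in prob_space) expectation_mult_le_of_equal_second_moments:
  fixes f g :: "'a \<Rightarrow> real"
  assumes "random_variable borel f" "random_variable borel g"
    and "integrable M (\<lambda>x. (f x)\<^sup>2)" "integrable M (\<lambda>x. (g x)\<^sup>2)"
    and "expectation (\<lambda>x. (f x)\<^sup>2) = a" "expectation (\<lambda>x. (g x)\<^sup>2) = a"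
  shows "expectation (\<lambda>x. f x * g x) \<le> a"
proof -
  have "0 \<le> expectation (\<lambda>x. (f x - g x)\<^sup>2)"
    by (rule integral_nonneg_AE) simp
  also have "\<dots> = expectation (\<lambda>x. (f x)\<^sup>2 + (g x)\<^sup>2 - 2 * (f x * g x))"
    by (simp add: power2_diff algebra_simps)
  also have "\<dots> = 2 * a - 2 * expectation (\<lambda>x. f x * g x)"
    using assms integrable_mult_of_square_integrable[OF assms(1-4)] by simp
  finally show ?thesis by simp
qed

lemma (in prob_space) variance_sum_equicorrelated:
  fixes X :: "'i \<Rightarrow> 'a \<Rightarrow> real"
  assumes "finite I"
    and meas: "\<And>i. i \<in> I \<Longrightarrow> random_variable borel (X i)"
    and sq_int: "\<And>i. i \<in> I \<Longrightarrow> integrable M (\<lambda>x. (X i x)\<^sup>2)"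
    and mean: "\<And>i. i \<in> I \<Longrightarrow> expectation (X i) = m"
    and second: "\<And>i. i \<in> I \<Longrightarrow> expectation (\<lambda>x. (X i x)\<^sup>2) = a"
    and mixed: "\<And>i j. i \<in> I \<Longrightarrow> j \<in> I \<Longrightarrow> i \<noteq> j \<Longrightarrow> expectation (\<lambda>x. X i x * X j x) = b"
  shows "variance (\<lambda>x. \<Sum>i\<in>I. X i x)
    = real (card I) * a + real (card I) * (real (card I) - 1) * b - (real (card I) * m)\<^sup>2"
proof -
  have int: "integrable M (X i)" if "i \<in> I" for i
    using square_integrable_imp_integrable meas sq_int that by blast
  have int_mult: "integrable M (\<lambda>x. X i x * X j x)" if "i \<in> I" "j \<in> I" for i j
    using integrable_mult_of_square_integrable meas sq_int that by blast
  have row: "(\<Sum>j\<in>I. expectation (\<lambda>x. X i x * X j x)) = a + (real (card I) - 1) * b"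
    if "i \<in> I" for i
  proof -
    have off_diagonal: "(\<Sum>j\<in>I - {i}. expectation (\<lambda>x. X i x * X j x)) = (\<Sum>j\<in>I - {i}. b)"
      using mixed[OF that] by (intro sum.cong) auto
    have "(\<Sum>j\<in>I. expectation (\<lambda>x. X i x * X j x))
        = expectation (\<lambda>x. (X i x)\<^sup>2) + (\<Sum>j\<in>I - {i}. expectation (\<lambda>x. X i x * X j x))"
      using \<open>finite I\<close> that by (simp add: sum.remove power2_eq_square)
    moreover have "0 < card I"
      using \<open>finite I\<close> that card_gt_0_iff by blast
    ultimately show ?thesis
      using \<open>finite I\<close> that second off_diagonal by simp
  qed
  have "integrable M (\<lambda>x. \<Sum>i\<in>I. X i x)"
    using int by simp
  moreover have "integrable M (\<lambda>x. (\<Sum>i\<in>I. X i x)\<^sup>2)"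
    using int_mult by (simp add: power2_eq_square sum_product)
  ultimately have "variance (\<lambda>x. \<Sum>i\<in>I. X i x)
      = expectation (\<lambda>x. (\<Sum>i\<in>I. X i x)\<^sup>2) - (expectation (\<lambda>x. \<Sum>i\<in>I. X i x))\<^sup>2"
    by (rule variance_eq)
  moreover have "expectation (\<lambda>x. (\<Sum>i\<in>I. X i x)\<^sup>2)
      = (\<Sum>i\<in>I. \<Sum>j\<in>I. expectation (\<lambda>x. X i x * X j x))"
    using int_mult by (simp add: power2_eq_square sum_product integrable_sum)
  moreover have "expectation (\<lambda>x. \<Sum>i\<in>I. X i x) = real (card I) * m"
    using int mean by simp
  ultimately show ?thesis
    using row by (simp add: algebra_simps)
qed

lemma equicorrelated_variance_ratio_bound:
  fixes a b m :: real and n k :: nat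
  assumes "1 \<le> k" "k \<le> n"
    and var_nonneg: "0 \<le> real n * a + real n * (real n - 1) * b - (real n * m)\<^sup>2"
    and mixed_le: "2 \<le> k \<Longrightarrow> b \<le> a"
  shows "real k * a + real k * (real k - 1) * b - (real k * m)\<^sup>2
    \<le> real k / real n * (real n * a)
      + (real k)\<^sup>2 / (real n)\<^sup>2 * (real n * a + real n * (real n - 1) * b - (real n * m)\<^sup>2)"
proof -
  have n_pos: "0 < real n"
    using assms(1,2) by simp
  have "real n * (a + (real n - 1) * b)
      = (real n * a + real n * (real n - 1) * b - (real n * m)\<^sup>2) + (real n * m)\<^sup>2"
    by (simp add: algebra_simps)
  then have "0 \<le> real n * (a + (real n - 1) * b)"
    using var_nonneg by (metis add_nonneg_nonneg zero_le_power2)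
  then have "0 \<le> a + (real n - 1) * b"
    using n_pos by (simp add: zero_le_mult_iff)
  moreover have "0 \<le> (real k - 1) * (a - b)"
    using assms(1) mixed_le by (cases "k = 1") auto
  moreover have "real n * b + real k * (a - b) = (a + (real n - 1) * b) + (real k - 1) * (a - b)"
    by (simp add: algebra_simps)
  ultimately have "0 \<le> real k / real n * (real n * b + real k * (a - b))"
    by simp
  also have "\<dots> = real k / real n * (real n * a)
      + (real k)\<^sup>2 / (real n)\<^sup>2 * (real n * a + real n * (real n - 1) * b - (real n * m)\<^sup>2)
      - (real k * a + real k * (real k - 1) * b - (real k * m)\<^sup>2)"
    using n_pos by (simp add: field_simps power2_eq_square)
  finally show ?thesis by simp
qed

lemma exchangeable_integral_sum_comp:
  fixes g :: "real \<Rightarrow> real"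
  assumes "\<And>i. i \<in> {1..n} \<Longrightarrow> \<xi> i \<in> borel_measurable M" and "exchangeable M n \<xi>"
    and "p \<le> n" and "g \<in> borel_measurable borel"
    and "\<And>i. i \<in> {1..n} \<Longrightarrow> integrable M (\<lambda>\<omega>. g (\<xi> i \<omega>))"
  shows "(\<integral>\<omega>. (\<Sum>i=1..p. g (\<xi> i \<omega>)) \<partial>M) = real p * (\<integral>\<omega>. g (\<xi> 1 \<omega>) \<partial>M)"
proof -
  have "(\<integral>\<omega>. (\<Sum>i=1..p. g (\<xi> i \<omega>)) \<partial>M) = (\<Sum>i=1..p. \<integral>\<omega>. g (\<xi> i \<omega>) \<partial>M)"
    using assms(3,5) by (intro Bochner_Integration.integral_sum) auto
  also have "\<dots> = (\<Sum>i=1..p. \<integral>\<omega>. g (\<xi> 1 \<omega>) \<partial>M)"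
    using \<open>p \<le> n\<close> by (intro sum.cong exchangeable_integral_comp_eq[OF assms(1,2) _ _ assms(4)]) auto
  finally show ?thesis
    by simp
qed

lemma (in prob_space) variance_partial_sum_exchangeable:
  fixes \<xi> :: "nat \<Rightarrow> 'a \<Rightarrow> real"
  assumes meas: "\<And>i. i \<in> {1..n} \<Longrightarrow> \<xi> i \<in> borel_measurable M" and exch: "exchangeable M n \<xi>"
    and sq_int: "\<And>i. i \<in> {1..n} \<Longrightarrow> integrable M (\<lambda>\<omega>. (\<xi> i \<omega>)\<^sup>2)"
    and "p \<le> n"
  shows "variance (\<lambda>\<omega>. \<Sum>i=1..p. \<xi> i \<omega>)
    = real p * expectation (\<lambda>\<omega>. (\<xi> 1 \<omega>)\<^sup>2)
      + real p * (real p - 1) * expectation (\<lambda>\<omega>. \<xi> 1 \<omega> * \<xi> 2 \<omega>)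
      - (real p * expectation (\<xi> 1))\<^sup>2"
proof -
  have sub: "i \<in> {1..n}" "1 \<in> {1..n}" if "i \<in> {1..p}" for i
    using that \<open>p \<le> n\<close> by auto
  have mean: "expectation (\<xi> i) = expectation (\<xi> 1)" if "i \<in> {1..p}" for i
    using exchangeable_integral_comp_eq[OF meas exch sub[OF that], of "\<lambda>x. x"] by simp
  have second: "expectation (\<lambda>\<omega>. (\<xi> i \<omega>)\<^sup>2) = expectation (\<lambda>\<omega>. (\<xi> 1 \<omega>)\<^sup>2)"
    if "i \<in> {1..p}" for i
    using exchangeable_integral_comp_eq[OF meas exch sub[OF that], of "\<lambda>x. x\<^sup>2"] by simp
  have mixed: "expectation (\<lambda>\<omega>. \<xi> i \<omega> * \<xi> j \<omega>) = expectation (\<lambda>\<omega>. \<xi> 1 \<omega> * \<xi> 2 \<omega>)"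
    if "i \<in> {1..p}" "j \<in> {1..p}" "i \<noteq> j" for i j
  proof (rule exchangeable_integral_pair_eq[OF meas exch])
    show "(\<lambda>(x::real, y). x * y) \<in> borel_measurable borel"
      unfolding borel_prod[symmetric] by measurable
  qed (use that \<open>p \<le> n\<close> in auto)
  have "variance (\<lambda>\<omega>. \<Sum>i\<in>{1..p}. \<xi> i \<omega>)
    = real (card {1..p}) * expectation (\<lambda>\<omega>. (\<xi> 1 \<omega>)\<^sup>2)
      + real (card {1..p}) * (real (card {1..p}) - 1) * expectation (\<lambda>\<omega>. \<xi> 1 \<omega> * \<xi> 2 \<omega>)
      - (real (card {1..p}) * expectation (\<xi> 1))\<^sup>2"
    using meas sq_int sub
    by (intro variance_sum_equicorrelated[OF finite_atLeastAtMost _ _ mean second mixed]) blast+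
  then show ?thesis
    by simp
qed

lemma (in prob_space) exchangeable_mixed_moment_le_second_moment:
  fixes \<xi> :: "nat \<Rightarrow> 'a \<Rightarrow> real"
  assumes meas: "\<And>i. i \<in> {1..n} \<Longrightarrow> \<xi> i \<in> borel_measurable M" and exch: "exchangeable M n \<xi>"
    and sq_int: "\<And>i. i \<in> {1..n} \<Longrightarrow> integrable M (\<lambda>\<omega>. (\<xi> i \<omega>)\<^sup>2)"
    and "2 \<le> n"
  shows "expectation (\<lambda>\<omega>. \<xi> 1 \<omega> * \<xi> 2 \<omega>) \<le> expectation (\<lambda>\<omega>. (\<xi> 1 \<omega>)\<^sup>2)"
proof (rule expectation_mult_le_of_equal_second_moments)
  have in_range: "1 \<in> {1..n}" "2 \<in> {1..n}"
    using \<open>2 \<le> n\<close> by auto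
  then show "random_variable borel (\<xi> 1)" "random_variable borel (\<xi> 2)"
    "integrable M (\<lambda>\<omega>. (\<xi> 1 \<omega>)\<^sup>2)" "integrable M (\<lambda>\<omega>. (\<xi> 2 \<omega>)\<^sup>2)"
    using meas sq_int by auto
  show "expectation (\<lambda>\<omega>. (\<xi> 2 \<omega>)\<^sup>2) = expectation (\<lambda>\<omega>. (\<xi> 1 \<omega>)\<^sup>2)"
    using exchangeable_integral_comp_eq[OF meas exch in_range(2,1), of "\<lambda>x. x\<^sup>2"] by simp
qed simp

theorem proposition6p5:
  fixes M :: "'a measure" and \<xi> :: "nat \<Rightarrow> 'a \<Rightarrow> real" and n k :: nat
  assumes "prob_space M"
    and "n \<ge> 1"
    and "\<And>i. i \<in> {1..n} \<Longrightarrow> \<xi> i \<in> borel_measurable M"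
    and "exchangeable M n \<xi>"
    and "integrable M (\<lambda>\<omega>. \<Sum>i=1..n. (\<xi> i \<omega>)\<^sup>2)"
    and "1 \<le> k" and "k \<le> n"
  shows "prob_space.variance M (\<lambda>\<omega>. \<Sum>i=1..k. \<xi> i \<omega>)
     \<le> real k / real n * prob_space.expectation M (\<lambda>\<omega>. \<Sum>i=1..n. (\<xi> i \<omega>)\<^sup>2)
       + (real k)\<^sup>2 / (real n)\<^sup>2 * prob_space.variance M (\<lambda>\<omega>. \<Sum>i=1..n. \<xi> i \<omega>)"
proof -
  interpret prob_space M by fact
  have sq_int: "integrable M (\<lambda>\<omega>. (\<xi> i \<omega>)\<^sup>2)" if "i \<in> {1..n}" for i
  proof (rule integrable_summand_of_nonneg_sum[OF finite_atLeastAtMost that _ _ assms(5)])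
    show "(\<lambda>\<omega>. (\<xi> i \<omega>)\<^sup>2) \<in> borel_measurable M"
      using assms(3)[OF that] by measurable
  qed simp
  define a where "a = expectation (\<lambda>\<omega>. (\<xi> 1 \<omega>)\<^sup>2)"
  define b where "b = expectation (\<lambda>\<omega>. \<xi> 1 \<omega> * \<xi> 2 \<omega>)"
  define m where "m = expectation (\<xi> 1)"
  have var_sum: "variance (\<lambda>\<omega>. \<Sum>i=1..p. \<xi> i \<omega>)
      = real p * a + real p * (real p - 1) * b - (real p * m)\<^sup>2" if "p \<le> n" for p
    unfolding a_def b_def m_def using assms(3,4) sq_int that by (rule variance_partial_sum_exchangeable)
  have sum_sq: "expectation (\<lambda>\<omega>. \<Sum>i=1..n. (\<xi> i \<omega>)\<^sup>2) = real n * a"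
    unfolding a_def by (rule exchangeable_integral_sum_comp[OF assms(3,4) order_refl _ sq_int]) measurable
  have var_n_nonneg: "0 \<le> real n * a + real n * (real n - 1) * b - (real n * m)\<^sup>2"
    by (subst var_sum[OF order_refl, symmetric]) (rule variance_positive)
  \<comment> \<open>Needed only for \<open>k \<ge> 2\<close>: if \<open>n = 1\<close>, the index 2 lies outside the vector and \<open>b\<close> is junk.\<close>
  have "b \<le> a" if "2 \<le> k"
    unfolding a_def b_def using assms(3,4) sq_int that assms(7)
    by (intro exchangeable_mixed_moment_le_second_moment[where n = n]) auto
  then show ?thesis
    unfolding sum_sq var_sum[OF assms(7)] var_sum[OF order_refl]
    by (rule equicorrelated_variance_ratio_bound[OF assms(6,7) var_n_nonneg])
qed

end
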